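(* (1) Let $n\in\mathbb N$ and let $T:\mathbb R_{n+1}[z]\to\mathbb R[z]$ be linear and preserve hyperbolicity. If $f\in\mathbb R[z]$ is strictly hyperbolic of degree $n$ or $n+1$ with $T(f)=0$, then $T(g)$ is hyperbolic or zero for every $g\in\mathbb R[z]$ with $\deg g\le n+1$. (2) Let $T:\mathbb C_n[z]\to\mathbb C[z]$ be a linear stability preserver. If $f\in\mathbb C[z]$ is strictly stable of degree $n$ with $T(f)=0$, then $T(g)$ is stable or zero for every $g\in\mathbb C[z]$ with $\deg g\le n$.
   Context: A real univariate polynomial is hyperbolic if it is non-zero with only real zeros; strictly hyperbolic if moreover its zeros are simple. A univariate complex polynomial $f$ is stable if $f\neq0$ and $f(z)\neq0$ whenever $\Im z>0$; strictly stable if $f(z)\neq0$ whenever $\Im z\ge0$. $T$ preserves hyperbolicity (resp. stability) if it maps hyperbolic (resp. stable) polynomials in its domain to hyperbolic (resp. stable) polynomials or $0$. *)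

theory Defs
  imports "HOL-Computational_Algebra.Polynomial" Complex_Main
begin

definition hyperbolic :: "real poly \<Rightarrow> bool" where
  "hyperbolic p \<longleftrightarrow> p \<noteq> 0 \<and>
     (\<forall>z::complex. poly (map_poly complex_of_real p) z = 0 \<longrightarrow> Im z = 0)"

definition strictly_hyperbolic :: "real poly \<Rightarrow> bool" where
  "strictly_hyperbolic p \<longleftrightarrow> hyperbolic p \<and>
     (\<forall>z::complex. poly (map_poly complex_of_real p) z = 0 \<longrightarrow>
        order z (map_poly complex_of_real p) = 1)"

definition stable :: "complex poly \<Rightarrow> bool" where
  "stable f \<longleftrightarrow> f \<noteq> 0 \<and> (\<forall>z. Im z > 0 \<longrightarrow> poly f z \<noteq> 0)"

definition strictly_stable :: "complex poly \<Rightarrow> bool" where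
  "strictly_stable f \<longleftrightarrow> f \<noteq> 0 \<and> (\<forall>z. Im z \<ge> 0 \<longrightarrow> poly f z \<noteq> 0)"

definition linear_on_deg :: "nat \<Rightarrow> ('a::comm_ring_1 poly \<Rightarrow> 'a poly) \<Rightarrow> bool" where
  "linear_on_deg m T \<longleftrightarrow>
     (\<forall>p q a b. degree p \<le> m \<longrightarrow> degree q \<le> m \<longrightarrow>
        T (smult a p + smult b q) = smult a (T p) + smult b (T q))"

definition preserves_hyperbolicity :: "nat \<Rightarrow> (real poly \<Rightarrow> real poly) \<Rightarrow> bool" where
  "preserves_hyperbolicity m T \<longleftrightarrow>
     (\<forall>p. degree p \<le> m \<longrightarrow> hyperbolic p \<longrightarrow> hyperbolic (T p) \<or> T p = 0)"

definition preserves_stability :: "nat \<Rightarrow> (complex poly \<Rightarrow> complex poly) \<Rightarrow> bool" where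
  "preserves_stability m T \<longleftrightarrow>
     (\<forall>p. degree p \<le> m \<longrightarrow> stable p \<longrightarrow> stable (T p) \<or> T p = 0)"

end

(* Since T f = 0, linearity gives T (f + \<epsilon> g) = \<epsilon> T g, so it suffices to find \<epsilon> \<noteq> 0 for which
   f + \<epsilon> g is hyperbolic (resp. stable) and of degree within the domain of T.

   Real case: each of the deg f simple zeros of f is a sign change, and these sign changes survive
   a small perturbation, so f + \<epsilon> g has at least deg f \<ge> deg (f + \<epsilon> g) - 1 distinct real zeros.
   That leaves no room for a conjugate pair of non-real zeros.

   Complex case: f has no zeros in the closed upper half-plane and grows like |z|^n there, so
   |g| \<le> M |f| on it, and f + \<epsilon> g has no zeros there as soon as |\<epsilon>| M < 1. *)
theory Submission
  imports Defs "HOL-Computational_Algebra.Fundamental_Theorem_Algebra"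
begin

lemma poly_map_poly_of_real:
  "poly (map_poly of_real p) (of_real x) = (of_real (poly p x) :: 'a::real_field)"
  by (induction p) (auto simp: map_poly_pCons)

lemma map_poly_of_real_eq_0_iff [simp]:
  "map_poly (of_real :: real \<Rightarrow> 'a::real_algebra_1) p = 0 \<longleftrightarrow> p = 0"
  by (intro map_poly_eq_0_iff) auto

lemma pderiv_map_poly_of_real:
  "pderiv (map_poly of_real p) = (map_poly of_real (pderiv p) :: 'a::real_field poly)"
  by (intro poly_eqI) (simp add: coeff_map_poly coeff_pderiv)

lemma hyperbolic_smult_iff: "c \<noteq> 0 \<Longrightarrow> hyperbolic (smult c p) \<longleftrightarrow> hyperbolic p"
  by (simp add: hyperbolic_def map_poly_smult)

lemma stable_smult_iff: "c \<noteq> 0 \<Longrightarrow> stable (smult c p) \<longleftrightarrow> stable p"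
  by (simp add: stable_def)

lemma strictly_stable_imp_stable: "strictly_stable f \<Longrightarrow> stable f"
  by (simp add: strictly_stable_def stable_def)

lemma linear_on_deg_add_smult_kernel:
  assumes "linear_on_deg m T" "degree f \<le> m" "degree g \<le> m" "T f = 0"
  shows "T (f + smult c g) = smult c (T g)"
proof -
  have "T (smult 1 f + smult c g) = smult 1 (T f) + smult c (T g)"
    using assms(1-3) unfolding linear_on_deg_def by blast
  then show ?thesis
    using assms(4) by simp
qed

lemma degree_add_smult_le: "degree f \<le> m \<Longrightarrow> degree g \<le> m \<Longrightarrow> degree (f + smult c g) \<le> m"
  by (meson degree_add_le degree_smult_le order_trans)

lemma tendsto_poly_add_smult:
  fixes f g :: "'a::real_normed_field poly"
  shows "((\<lambda>\<epsilon>. poly (f + smult \<epsilon> g) x) \<longlongrightarrow> poly f x) (at 0 within S)"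
proof -
  have "((\<lambda>\<epsilon>. poly f x + \<epsilon> * poly g x) \<longlongrightarrow> poly f x + 0 * poly g x) (at 0 within S)"
    by (intro tendsto_intros)
  then show ?thesis
    by simp
qed

lemma roots_map_poly_of_real_if_hyperbolic:
  assumes "hyperbolic p"
  shows "{z. poly (map_poly complex_of_real p) z = 0} = complex_of_real ` {x. poly p x = 0}"
proof (intro equalityI subsetI)
  fix z assume z: "z \<in> {z. poly (map_poly complex_of_real p) z = 0}"
  with assms have "Im z = 0"
    unfolding hyperbolic_def by blast
  then obtain x where "z = of_real x"
    by (metis complex_is_Real_iff Reals_cases)
  with z show "z \<in> complex_of_real ` {x. poly p x = 0}"
    by (simp add: poly_map_poly_of_real image_iff)
next
  fix z assume "z \<in> complex_of_real ` {x. poly p x = 0}"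
  then show "z \<in> {z. poly (map_poly complex_of_real p) z = 0}"
    by (auto simp: poly_map_poly_of_real)
qed

lemma hyperbolic_if_card_roots:
  fixes p :: "real poly"
  assumes p0: "p \<noteq> 0" and deg: "degree p \<le> card {x. poly p x = 0} + 1"
  shows "hyperbolic p"
proof -
  let ?P = "map_poly complex_of_real p"
  let ?R = "complex_of_real ` {x. poly p x = 0}"
  have P0: "?P \<noteq> 0"
    using p0 by simp
  have card_R: "card ?R = card {x. poly p x = 0}"
    by (rule card_image) (simp add: inj_on_def)
  have "Im z = 0" if z: "poly ?P z = 0" for z
  proof (rule ccontr)
    assume "Im z \<noteq> 0"
    then have new: "z \<notin> ?R" "cnj z \<notin> ?R" "z \<noteq> cnj z"
      by (auto simp: complex_eq_iff)
    have "poly ?P (cnj z) = 0"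
      using z by (subst real_poly_cnj_root_iff) (auto simp: coeff_map_poly)
    with z have "insert z (insert (cnj z) ?R) \<subseteq> {z. poly ?P z = 0}"
      by (auto simp: poly_map_poly_of_real)
    then have "card (insert z (insert (cnj z) ?R)) \<le> card {z. poly ?P z = 0}"
      by (intro card_mono poly_roots_finite P0)
    also have "\<dots> \<le> degree p"
      using card_poly_roots_bound[OF P0] by (simp add: degree_map_poly)
    finally show False
      using new deg card_R poly_roots_finite[OF p0] by simp
  qed
  then show ?thesis
    using p0 by (simp add: hyperbolic_def)
qed

lemma rsquarefree_if_strictly_hyperbolic:
  "strictly_hyperbolic f \<Longrightarrow> rsquarefree (map_poly complex_of_real f)"
  by (auto simp: strictly_hyperbolic_def hyperbolic_def rsquarefree_def order_root)

lemma card_roots_strictly_hyperbolic: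
  assumes "strictly_hyperbolic f"
  shows "card {x. poly f x = 0} = degree f"
proof -
  let ?F = "map_poly complex_of_real f"
  have sqf: "rsquarefree ?F"
    using assms by (rule rsquarefree_if_strictly_hyperbolic)
  then have "lead_coeff ?F \<noteq> 0"
    by (simp add: rsquarefree_def)
  then have "degree f = degree (\<Prod>z | poly ?F z = 0. [:-z, 1:])"
    using complex_poly_decompose_rsquarefree[OF sqf]
    by (metis degree_map_poly degree_smult_eq of_real_eq_0_iff)
  also have "\<dots> = card {z. poly ?F z = 0}"
    by (simp add: degree_prod_sum_eq)
  also have "\<dots> = card {x. poly f x = 0}"
    using assms unfolding strictly_hyperbolic_def
    by (simp add: roots_map_poly_of_real_if_hyperbolic card_image inj_on_def)
  finally show ?thesis by simp
qed

lemma pderiv_nonzero_if_strictly_hyperbolic: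
  assumes "strictly_hyperbolic f" "poly f r = 0"
  shows "poly (pderiv f) r \<noteq> 0"
  using rsquarefree_if_strictly_hyperbolic[OF assms(1)] assms(2)
  by (simp add: rsquarefree_roots pderiv_map_poly_of_real)
    (metis of_real_0 poly_map_poly_of_real)

lemma eventually_sign_change_at_simple_root:
  fixes f :: "real poly"
  assumes "poly f r = 0" "poly (pderiv f) r \<noteq> 0"
  shows "\<forall>\<^sub>F h in at_right 0. poly f (r - h) * poly f (r + h) < 0"
proof -
  obtain q where f: "f = [:-r, 1:] * q"
    using assms(1) by (metis dvdE poly_eq_0_iff_dvd)
  have "poly (pderiv f) r = poly q r"
    unfolding f pderiv_mult by (simp add: pderiv_pCons)
  then have "poly q r \<noteq> 0"
    using assms(2) by simp
  moreover have "((\<lambda>h. poly q (r - h) * poly q (r + h)) \<longlongrightarrow> poly q (r - 0) * poly q (r + 0)) (at_right 0)"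
    by (intro tendsto_intros)
  ultimately have "\<forall>\<^sub>F h in at_right 0. 0 < poly q (r - h) * poly q (r + h)"
    by (intro order_tendstoD(1)) (auto simp: zero_less_mult_iff)
  with eventually_at_right_less show ?thesis
  proof eventually_elim
    case (elim h)
    have "poly f (r - h) * poly f (r + h) = - (h * h) * (poly q (r - h) * poly q (r + h))"
      by (simp add: f algebra_simps)
    also have "\<dots> < 0"
      using elim by (intro mult_neg_pos) auto
    finally show ?case .
  qed
qed

lemma sign_changes_at_simple_roots:
  fixes f :: "real poly"
  assumes f0: "f \<noteq> 0" and simple: "\<And>r. poly f r = 0 \<Longrightarrow> poly (pderiv f) r \<noteq> 0"
  obtains \<delta> where "\<delta> > 0"
    "\<And>r. poly f r = 0 \<Longrightarrow> poly f (r - \<delta>) * poly f (r + \<delta>) < 0"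
    "\<And>r r'. poly f r = 0 \<Longrightarrow> poly f r' = 0 \<Longrightarrow> r \<noteq> r' \<Longrightarrow> 2 * \<delta> < \<bar>r - r'\<bar>"
proof -
  define R where "R = {r. poly f r = 0}"
  have "finite R"
    using f0 by (simp add: R_def poly_roots_finite)
  have "\<forall>\<^sub>F \<delta> in at_right 0. \<forall>r\<in>R. poly f (r - \<delta>) * poly f (r + \<delta>) < 0"
    using \<open>finite R\<close> simple
    by (intro eventually_ball_finite) (auto simp: R_def intro: eventually_sign_change_at_simple_root)
  moreover have "\<forall>\<^sub>F \<delta> in at_right 0. \<forall>r\<in>R. \<forall>r'\<in>R. r \<noteq> r' \<longrightarrow> 2 * \<delta> < \<bar>r - r'\<bar>"
  proof (intro eventually_ball_finite \<open>finite R\<close> ballI)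
    fix r r' :: real
    have "\<forall>\<^sub>F \<delta> in at_right 0. \<delta> < \<bar>r - r'\<bar> / 2" if "r \<noteq> r'"
      using that by (intro order_tendstoD(2)[OF tendsto_ident_at]) auto
    then show "\<forall>\<^sub>F \<delta> in at_right 0. r \<noteq> r' \<longrightarrow> 2 * \<delta> < \<bar>r - r'\<bar>"
      by (cases "r = r'") (auto elim: eventually_mono)
  qed
  ultimately have "\<forall>\<^sub>F \<delta> in at_right 0. \<delta> > 0 \<and> (\<forall>r\<in>R. poly f (r - \<delta>) * poly f (r + \<delta>) < 0)
      \<and> (\<forall>r\<in>R. \<forall>r'\<in>R. r \<noteq> r' \<longrightarrow> 2 * \<delta> < \<bar>r - r'\<bar>)"
    using eventually_at_right_less by eventually_elim blast
  then show ?thesis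
    using that eventually_happens'[OF trivial_limit_at_right_real] unfolding R_def by blast
qed

lemma card_le_card_roots_if_sign_changes:
  fixes p :: "real poly"
  assumes "finite R" "p \<noteq> 0" "\<delta> > 0"
    and sign: "\<And>r. r \<in> R \<Longrightarrow> poly p (r - \<delta>) * poly p (r + \<delta>) < 0"
    and sep: "\<And>r r'. r \<in> R \<Longrightarrow> r' \<in> R \<Longrightarrow> r \<noteq> r' \<Longrightarrow> 2 * \<delta> < \<bar>r - r'\<bar>"
  shows "card R \<le> card {x. poly p x = 0}"
proof -
  have "\<exists>s. r - \<delta> < s \<and> s < r + \<delta> \<and> poly p s = 0" if "r \<in> R" for r
    using poly_IVT[OF _ sign[OF that]] \<open>\<delta> > 0\<close> by auto
  then obtain s where s: "\<And>r. r \<in> R \<Longrightarrow> r - \<delta> < s r \<and> s r < r + \<delta> \<and> poly p (s r) = 0"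
    by metis
  have "inj_on s R"
  proof (rule inj_onI, rule ccontr)
    fix r r' assume "r \<in> R" "r' \<in> R" "s r = s r'" "r \<noteq> r'"
    with s[of r] s[of r'] sep[of r r'] show False
      by auto
  qed
  then have "card R = card (s ` R)"
    by (simp add: card_image)
  also have "\<dots> \<le> card {x. poly p x = 0}"
    using s by (intro card_mono poly_roots_finite \<open>p \<noteq> 0\<close>) auto
  finally show ?thesis .
qed

lemma strictly_hyperbolic_perturbation:
  fixes f g :: "real poly"
  assumes f: "strictly_hyperbolic f" and g: "degree g \<le> degree f + 1"
  shows "\<forall>\<^sub>F \<epsilon> in at_right 0. hyperbolic (f + smult \<epsilon> g)"
proof -
  define R where "R = {r. poly f r = 0}"
  have f0: "f \<noteq> 0"
    using f by (simp add: strictly_hyperbolic_def hyperbolic_def)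
  then have "finite R"
    by (simp add: R_def poly_roots_finite)
  obtain \<delta> where \<delta>: "\<delta> > 0"
    "\<And>r. poly f r = 0 \<Longrightarrow> poly f (r - \<delta>) * poly f (r + \<delta>) < 0"
    "\<And>r r'. poly f r = 0 \<Longrightarrow> poly f r' = 0 \<Longrightarrow> r \<noteq> r' \<Longrightarrow> 2 * \<delta> < \<bar>r - r'\<bar>"
    using sign_changes_at_simple_roots[OF f0 pderiv_nonzero_if_strictly_hyperbolic[OF f]] by blast
  obtain x where "poly f x \<noteq> 0"
    using f0 poly_all_0_iff_0 by blast
  have "\<forall>\<^sub>F \<epsilon> in at_right 0. poly (f + smult \<epsilon> g) x \<noteq> 0"
    using tendsto_poly_add_smult \<open>poly f x \<noteq> 0\<close> by (rule tendsto_imp_eventually_ne)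
  moreover have "\<forall>\<^sub>F \<epsilon> in at_right 0. \<forall>r\<in>R.
      poly (f + smult \<epsilon> g) (r - \<delta>) * poly (f + smult \<epsilon> g) (r + \<delta>) < 0"
    using \<open>finite R\<close> \<delta>(2) unfolding R_def
    by (intro eventually_ball_finite ballI
        order_tendstoD(2)[OF tendsto_mult[OF tendsto_poly_add_smult tendsto_poly_add_smult]]) auto
  ultimately show ?thesis
  proof eventually_elim
    case (elim \<epsilon>)
    let ?p = "f + smult \<epsilon> g"
    have "?p \<noteq> 0"
      using elim(1) by (metis poly_0)
    have "degree f \<le> card {x. poly ?p x = 0}"
      using card_le_card_roots_if_sign_changes[OF \<open>finite R\<close> \<open>?p \<noteq> 0\<close> \<delta>(1)] elim(2) \<delta>(3)
        card_roots_strictly_hyperbolic[OF f] unfolding R_def by simp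
    moreover have "degree ?p \<le> degree f + 1"
      using g by (intro degree_add_smult_le) auto
    ultimately show "hyperbolic ?p"
      using \<open>?p \<noteq> 0\<close> by (intro hyperbolic_if_card_roots) auto
  qed
qed

lemma norm_diff_lower_bound_if_Im_neg:
  fixes a :: complex
  assumes "Im a < 0"
  obtains k where "k > 0" "\<And>z. 0 \<le> Im z \<Longrightarrow> k * (1 + cmod z) \<le> cmod (z - a)"
proof
  define h where "h = - Im a"
  have "h > 0"
    using assms by (simp add: h_def)
  moreover have "1 + cmod a + h > 0"
    using \<open>h > 0\<close> norm_ge_zero[of a] by linarith
  ultimately show "h / (1 + cmod a + h) > 0"
    by simp
  fix z :: complex assume "0 \<le> Im z"
  then have "h \<le> cmod (z - a)"
    using abs_Im_le_cmod[of "z - a"] by (simp add: h_def)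
  have "cmod z \<le> cmod (z - a) + cmod a"
    using norm_triangle_ineq2[of z a] by simp
  have "h * (1 + cmod z) \<le> h * (1 + cmod a + cmod (z - a))"
    using \<open>cmod z \<le> cmod (z - a) + cmod a\<close> \<open>h > 0\<close> by (intro mult_left_mono) auto
  also have "\<dots> = h * (1 + cmod a) + h * cmod (z - a)"
    by (simp add: algebra_simps)
  also have "\<dots> \<le> cmod (z - a) * (1 + cmod a) + h * cmod (z - a)"
    using \<open>h \<le> cmod (z - a)\<close> by (intro add_right_mono mult_right_mono) auto
  finally have "h * (1 + cmod z) \<le> (1 + cmod a + h) * cmod (z - a)"
    by (simp add: algebra_simps)
  then show "h / (1 + cmod a + h) * (1 + cmod z) \<le> cmod (z - a)"
    using \<open>1 + cmod a + h > 0\<close> by (simp add: field_simps)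
qed

lemma strictly_stable_lower_bound:
  assumes "strictly_stable f"
  obtains k where "k > 0" "\<And>z. 0 \<le> Im z \<Longrightarrow> k * (1 + cmod z) ^ degree f \<le> cmod (poly f z)"
proof -
  obtain root where f: "smult (lead_coeff f) (\<Prod>i<degree f. [:-root i, 1:]) = f"
    using complex_poly_decompose' by blast
  have poly_f: "poly f z = lead_coeff f * (\<Prod>i<degree f. z - root i)" for z
    by (subst f [symmetric]) (simp add: poly_prod)
  have "Im (root i) < 0" if "i < degree f" for i
  proof -
    have "poly f (root i) = 0"
      unfolding poly_f using that by (auto intro: prod_zero)
    then show ?thesis
      using assms by (meson not_le strictly_stable_def)
  qed
  then have "\<exists>c>0. \<forall>z. 0 \<le> Im z \<longrightarrow> c * (1 + cmod z) \<le> cmod (z - root i)"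
    if "i < degree f" for i
    using norm_diff_lower_bound_if_Im_neg that by metis
  then obtain k where k: "\<And>i. i < degree f \<Longrightarrow> k i > 0"
    "\<And>i z. i < degree f \<Longrightarrow> 0 \<le> Im z \<Longrightarrow> k i * (1 + cmod z) \<le> cmod (z - root i)"
    by metis
  have "lead_coeff f \<noteq> 0"
    using assms by (simp add: strictly_stable_def)
  show ?thesis
  proof
    show "cmod (lead_coeff f) * (\<Prod>i<degree f. k i) > 0"
      using k(1) \<open>lead_coeff f \<noteq> 0\<close> by (intro mult_pos_pos prod_pos) auto
    fix z :: complex assume "0 \<le> Im z"
    have "cmod (lead_coeff f) * (\<Prod>i<degree f. k i) * (1 + cmod z) ^ degree f
        = cmod (lead_coeff f) * (\<Prod>i<degree f. k i * (1 + cmod z))"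
      by (simp add: prod.distrib)
    also have "\<dots> \<le> cmod (lead_coeff f) * (\<Prod>i<degree f. cmod (z - root i))"
      using k \<open>0 \<le> Im z\<close> by (intro mult_left_mono prod_mono) (auto simp: less_imp_le)
    also have "\<dots> = cmod (poly f z)"
      by (simp add: poly_f norm_mult prod_norm)
    finally show "cmod (lead_coeff f) * (\<Prod>i<degree f. k i) * (1 + cmod z) ^ degree f
        \<le> cmod (poly f z)" .
  qed
qed

lemma norm_poly_le_coeff_sum:
  fixes p :: "'a::real_normed_field poly"
  assumes "degree p \<le> n"
  shows "norm (poly p z) \<le> (\<Sum>i\<le>degree p. norm (coeff p i)) * (1 + norm z) ^ n"
proof -
  have "norm (poly p z) \<le> (\<Sum>i\<le>degree p. norm (coeff p i * z ^ i))"
    unfolding poly_altdef by (rule norm_sum)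
  also have "\<dots> \<le> (\<Sum>i\<le>degree p. norm (coeff p i) * (1 + norm z) ^ n)"
  proof (intro sum_mono)
    fix i assume "i \<in> {..degree p}"
    have "norm z ^ i \<le> (1 + norm z) ^ i"
      by (intro power_mono) auto
    also have "\<dots> \<le> (1 + norm z) ^ n"
      using \<open>i \<in> {..degree p}\<close> assms by (intro power_increasing) auto
    finally have "norm z ^ i \<le> (1 + norm z) ^ n" .
    then show "norm (coeff p i * z ^ i) \<le> norm (coeff p i) * (1 + norm z) ^ n"
      by (simp add: norm_mult norm_power mult_left_mono)
  qed
  also have "\<dots> = (\<Sum>i\<le>degree p. norm (coeff p i)) * (1 + norm z) ^ n"
    by (simp add: sum_distrib_right)
  finally show ?thesis .
qed

lemma strictly_stable_dominates:
  assumes f: "strictly_stable f" and g: "degree g \<le> degree f"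
  obtains M where "M > 0" "\<And>z. 0 \<le> Im z \<Longrightarrow> cmod (poly g z) \<le> M * cmod (poly f z)"
proof -
  obtain k where k: "k > 0" "\<And>z. 0 \<le> Im z \<Longrightarrow> k * (1 + cmod z) ^ degree f \<le> cmod (poly f z)"
    using strictly_stable_lower_bound[OF f] by blast
  define C where "C = (\<Sum>i\<le>degree g. cmod (coeff g i))"
  have "C \<ge> 0"
    by (simp add: C_def sum_nonneg)
  show ?thesis
  proof
    show "C / k + 1 > 0"
      using \<open>C \<ge> 0\<close> \<open>k > 0\<close> by (simp add: add_nonneg_pos)
    fix z :: complex assume "0 \<le> Im z"
    have "cmod (poly g z) \<le> C * (1 + cmod z) ^ degree f"
      unfolding C_def using g by (rule norm_poly_le_coeff_sum)
    also have "\<dots> = C / k * (k * (1 + cmod z) ^ degree f)"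
      using \<open>k > 0\<close> by simp
    also have "\<dots> \<le> C / k * cmod (poly f z)"
      using k(2)[OF \<open>0 \<le> Im z\<close>] \<open>C \<ge> 0\<close> \<open>k > 0\<close> by (intro mult_left_mono) auto
    also have "\<dots> \<le> (C / k + 1) * cmod (poly f z)"
      by (simp add: distrib_right)
    finally show "cmod (poly g z) \<le> (C / k + 1) * cmod (poly f z)" .
  qed
qed

lemma strictly_stable_perturbation:
  assumes f: "strictly_stable f" and g: "degree g \<le> degree f"
  shows "\<forall>\<^sub>F \<epsilon> in at 0. strictly_stable (f + smult \<epsilon> g)"
proof -
  obtain M where M: "M > 0" "\<And>z. 0 \<le> Im z \<Longrightarrow> cmod (poly g z) \<le> M * cmod (poly f z)"
    using strictly_stable_dominates[OF f g] by blast
  have "((\<lambda>\<epsilon>. cmod \<epsilon> * M) \<longlongrightarrow> cmod 0 * M) (at 0)"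
    by (intro tendsto_intros)
  then have "\<forall>\<^sub>F \<epsilon> in at 0. cmod \<epsilon> * M < 1"
    by (rule order_tendstoD(2)) simp
  then show ?thesis
  proof (rule eventually_mono)
    fix \<epsilon> :: complex assume small: "cmod \<epsilon> * M < 1"
    have nonzero: "poly (f + smult \<epsilon> g) z \<noteq> 0" if "0 \<le> Im z" for z
    proof
      assume "poly (f + smult \<epsilon> g) z = 0"
      then have "cmod (poly f z) = cmod (\<epsilon> * poly g z)"
        by (simp add: add_eq_0_iff2)
      also have "\<dots> \<le> cmod \<epsilon> * (M * cmod (poly f z))"
        using M(2)[OF that] by (simp add: norm_mult mult_left_mono)
      also have "\<dots> < cmod (poly f z)"
        using small f that by (simp add: strictly_stable_def)
      finally show False by simp
    qed
    then have "f + smult \<epsilon> g \<noteq> 0"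
      by (metis poly_0 zero_complex.sel(2) order_refl)
    with nonzero show "strictly_stable (f + smult \<epsilon> g)"
      by (simp add: strictly_stable_def)
  qed
qed

lemma hyperbolic_image_if_kernel_strictly_hyperbolic:
  assumes T: "linear_on_deg m T" "preserves_hyperbolicity m T"
    and f: "strictly_hyperbolic f" "degree f \<le> m" "m \<le> degree f + 1" "T f = 0"
    and g: "degree g \<le> m"
  shows "hyperbolic (T g) \<or> T g = 0"
proof -
  have "degree g \<le> degree f + 1"
    using f(3) g by linarith
  then have "\<forall>\<^sub>F \<epsilon> in at_right 0. \<epsilon> > 0 \<and> hyperbolic (f + smult \<epsilon> g)"
    by (intro eventually_conj eventually_at_right_less strictly_hyperbolic_perturbation[OF f(1)])
  then obtain \<epsilon> :: real where "\<epsilon> > 0" "hyperbolic (f + smult \<epsilon> g)"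
    using eventually_happens'[OF trivial_limit_at_right_real] by blast
  moreover have "degree (f + smult \<epsilon> g) \<le> m"
    using f(2) g by (rule degree_add_smult_le)
  ultimately have "hyperbolic (T (f + smult \<epsilon> g)) \<or> T (f + smult \<epsilon> g) = 0"
    using T(2) by (simp add: preserves_hyperbolicity_def)
  then show ?thesis
    using \<open>\<epsilon> > 0\<close> linear_on_deg_add_smult_kernel[OF T(1) f(2) g f(4)]
    by (simp add: hyperbolic_smult_iff)
qed

lemma stable_image_if_kernel_strictly_stable:
  assumes T: "linear_on_deg m T" "preserves_stability m T"
    and f: "strictly_stable f" "degree f = m" "T f = 0"
    and g: "degree g \<le> m"
  shows "stable (T g) \<or> T g = 0"
proof -
  have "degree g \<le> degree f"
    using f(2) g by simp
  then have "\<forall>\<^sub>F \<epsilon> in at 0. \<epsilon> \<noteq> 0 \<and> strictly_stable (f + smult \<epsilon> g)"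
    by (intro eventually_conj eventually_neq_at_within strictly_stable_perturbation[OF f(1)])
  then obtain \<epsilon> :: complex where "\<epsilon> \<noteq> 0" "strictly_stable (f + smult \<epsilon> g)"
    using eventually_happens'[OF at_neq_bot] by blast
  moreover have "degree (f + smult \<epsilon> g) \<le> m"
    using f(2) g by (intro degree_add_smult_le) auto
  ultimately have "stable (T (f + smult \<epsilon> g)) \<or> T (f + smult \<epsilon> g) = 0"
    using T(2) strictly_stable_imp_stable by (simp add: preserves_stability_def)
  then show ?thesis
    using \<open>\<epsilon> \<noteq> 0\<close> linear_on_deg_add_smult_kernel[OF T(1) _ g f(3)] f(2)
    by (simp add: stable_smult_iff)
qed

theorem mainTheorem12:
  shows "(\<forall>(n::nat) (T::real poly \<Rightarrow> real poly) (f::real poly).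
            linear_on_deg (n + 1) T \<and> preserves_hyperbolicity (n + 1) T \<and>
            strictly_hyperbolic f \<and> (degree f = n \<or> degree f = n + 1) \<and> T f = 0
            \<longrightarrow> (\<forall>g. degree g \<le> n + 1 \<longrightarrow> hyperbolic (T g) \<or> T g = 0))
       \<and> (\<forall>(n::nat) (T::complex poly \<Rightarrow> complex poly) (f::complex poly).
            linear_on_deg n T \<and> preserves_stability n T \<and>
            strictly_stable f \<and> degree f = n \<and> T f = 0
            \<longrightarrow> (\<forall>g. degree g \<le> n \<longrightarrow> stable (T g) \<or> T g = 0))"
proof (intro conjI allI impI; elim conjE)
  fix n :: nat and T :: "real poly \<Rightarrow> real poly" and f g :: "real poly"
  assume T: "linear_on_deg (n + 1) T" "preserves_hyperbolicity (n + 1) T"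
    and f: "strictly_hyperbolic f" "degree f = n \<or> degree f = n + 1" "T f = 0"
    and g: "degree g \<le> n + 1"
  from f(2) have deg_f: "degree f \<le> n + 1" "n + 1 \<le> degree f + 1"
    by auto
  show "hyperbolic (T g) \<or> T g = 0"
    by (rule hyperbolic_image_if_kernel_strictly_hyperbolic[OF T f(1) deg_f f(3) g])
next
  fix n :: nat and T :: "complex poly \<Rightarrow> complex poly" and f g :: "complex poly"
  assume "linear_on_deg n T" "preserves_stability n T" "strictly_stable f" "degree f = n"
    "T f = 0" "degree g \<le> n"
  then show "stable (T g) \<or> T g = 0"
    by (rule stable_image_if_kernel_strictly_stable)
qed

end
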